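(* $\Theta_t \cong \Gamma_t$ (as graphs).
   Context: $\mathcal{M}_{2n}$ is the set of perfect matchings of $K_{2n}$ and $\mathcal{M}_{2n-1}$ the set of near-perfect matchings of $K_{2n-1}$ (matchings with $n-1$ edges). $\Gamma_t$ is the graph on $\mathcal{M}_{2n}$ in which $m,m'$ are adjacent iff $|m\cap m'|<t$. For $m,m'\in\mathcal{M}_{2n-1}$, the multigraph union $m\cup m'$ is a disjoint union of even cycles (a common edge counting as a cycle of length $2$) and exactly one path with an even number of edges (possibly a single vertex, when $m,m'$ leave the same vertex unmatched); $d'(m,m')\vdash 2n-1$ is the partition whose parts are the numbers of vertices of these components (so each cycle of length $2k$ gives a part $2k$ and the path with $\ell$ edges gives the unique odd part $\ell+1$). $\Theta_t$ is the graph on $\mathcal{M}_{2n-1}$ in which $m,m'$ are adjacent iff $d'(m,m')$ has fewer than $t$ parts of size at most $2$. *)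

theory Defs
  imports Main "HOL-Library.Multiset"
begin

text \<open>Vertices of K_N are {0..<N}; edges are 2-element sets of vertices.\<close>

definition edges_of :: "nat set \<Rightarrow> nat set set" where
  "edges_of V = {e. \<exists>a b. a \<noteq> b \<and> a \<in> V \<and> b \<in> V \<and> e = {a, b}}"

definition is_matching :: "nat set \<Rightarrow> nat set set \<Rightarrow> bool" where
  "is_matching V m \<longleftrightarrow> m \<subseteq> edges_of V \<and>
     (\<forall>e\<in>m. \<forall>e'\<in>m. e \<noteq> e' \<longrightarrow> e \<inter> e' = {})"

definition perfect_matchings :: "nat \<Rightarrow> nat set set set" where
  "perfect_matchings n = {m. is_matching {0..<2*n} m \<and> \<Union>m = {0..<2*n}}"

definition near_perfect_matchings :: "nat \<Rightarrow> nat set set set" where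
  "near_perfect_matchings n = {m. is_matching {0..<2*n-1} m \<and> card m = n - 1}"

text \<open>Connected components of the (multi)graph with vertex set V and edge set E
  (parallel edges do not affect vertex sets of components).\<close>
definition adj_rel :: "nat set set \<Rightarrow> (nat \<times> nat) set" where
  "adj_rel E = {(x, y). {x, y} \<in> E}"

definition component :: "nat set \<Rightarrow> nat set set \<Rightarrow> nat \<Rightarrow> nat set" where
  "component V E v = {w \<in> V. (v, w) \<in> (adj_rel E)\<^sup>*}"

definition components :: "nat set \<Rightarrow> nat set set \<Rightarrow> nat set set" where
  "components V E = component V E ` V"

definition d' :: "nat \<Rightarrow> nat set set \<Rightarrow> nat set set \<Rightarrow> nat multiset" where
  "d' n m m' = image_mset card (mset_set (components {0..<2*n-1} (m \<union> m')))"

definition Gamma_adj :: "nat \<Rightarrow> nat \<Rightarrow> nat set set \<Rightarrow> nat set set \<Rightarrow> bool" where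
  "Gamma_adj n t m m' \<longleftrightarrow> m \<noteq> m' \<and> card (m \<inter> m') < t"

definition Theta_adj :: "nat \<Rightarrow> nat \<Rightarrow> nat set set \<Rightarrow> nat set set \<Rightarrow> bool" where
  "Theta_adj n t m m' \<longleftrightarrow> m \<noteq> m' \<and> size (filter_mset (\<lambda>p. p \<le> 2) (d' n m m')) < t"

definition graph_iso :: "'a set \<Rightarrow> ('a \<Rightarrow> 'a \<Rightarrow> bool) \<Rightarrow> 'b set \<Rightarrow> ('b \<Rightarrow> 'b \<Rightarrow> bool) \<Rightarrow> bool" where
  "graph_iso V1 E1 V2 E2 \<longleftrightarrow> (\<exists>f. bij_betw f V1 V2 \<and>
     (\<forall>x\<in>V1. \<forall>y\<in>V1. E1 x y \<longleftrightarrow> E2 (f x) (f y)))"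

end

theory Submission
  imports Defs
begin

text \<open>A near-perfect matching m of K_{2n-1} leaves exactly one vertex u uncovered, and
  m \<mapsto> m \<union> {{u, 2n-1}} is a bijection onto the perfect matchings of K_{2n} whose inverse
  deletes the edge at 2n-1. In m \<union> m' the one-vertex components are the vertices uncovered
  by both matchings, and the two-vertex components are exactly the common edges, since each
  matching leaves at most one vertex uncovered. So the parts of d'(m,m') of size at most 2
  are counted by the common edges of the two extended perfect matchings.\<close>

lemma edges_of_mono: "V \<subseteq> W \<Longrightarrow> edges_of V \<subseteq> edges_of W"
  unfolding edges_of_def by blast

lemma edge_subset: "e \<in> edges_of V \<Longrightarrow> e \<subseteq> V"
  by (auto simp: edges_of_def)

lemma card_edge: "e \<in> edges_of V \<Longrightarrow> card e = 2"
  by (auto simp: edges_of_def)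

lemma edge_through_vertex:
  assumes "e \<in> edges_of V" "a \<in> e"
  obtains b where "b \<noteq> a" "b \<in> V" "e = {a, b}"
proof -
  obtain x y where xy: "x \<noteq> y" "x \<in> V" "y \<in> V" "e = {x, y}"
    using assms(1) by (auto simp: edges_of_def)
  then consider "a = x" | "a = y"
    using assms(2) by blast
  then show thesis
  proof cases
    case 1
    then show thesis
      using that[of y] xy by simp
  next
    case 2
    then show thesis
      using that[of x] xy by (simp add: insert_commute)
  qed
qed

lemma matching_edges: "is_matching V m \<Longrightarrow> m \<subseteq> edges_of V"
  by (simp add: is_matching_def)

lemma matching_edge_unique:
  "is_matching V m \<Longrightarrow> e \<in> m \<Longrightarrow> e' \<in> m \<Longrightarrow> x \<in> e \<Longrightarrow> x \<in> e' \<Longrightarrow> e = e'"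
  unfolding is_matching_def by blast

lemma matching_Union_subset: "is_matching V m \<Longrightarrow> \<Union>m \<subseteq> V"
  using matching_edges edge_subset by blast

lemma matching_mono: "is_matching V m \<Longrightarrow> V \<subseteq> W \<Longrightarrow> is_matching W m"
  using edges_of_mono[of V W] unfolding is_matching_def by blast

lemma matching_insert_edge:
  assumes "is_matching V m" "u \<in> V" "w \<in> V" "u \<noteq> w" "u \<notin> \<Union>m" "w \<notin> \<Union>m"
  shows "is_matching V (insert {u, w} m)"
proof -
  have "{u, w} \<in> edges_of V"
    using assms(2-4) by (auto simp: edges_of_def)
  moreover have "{u, w} \<inter> e = {}" if "e \<in> m" for e
    using assms(5,6) that by blast
  ultimately show ?thesis
    using assms(1) unfolding is_matching_def by (auto simp: Int_commute)
qed

definition edges_avoiding :: "nat \<Rightarrow> nat set set \<Rightarrow> nat set set" where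
  "edges_avoiding w m = {e \<in> m. w \<notin> e}"

lemma matching_edges_avoiding:
  assumes "is_matching V m"
  shows "is_matching (V - {w}) (edges_avoiding w m)"
proof -
  have "e \<in> edges_of (V - {w})" if e: "e \<in> m" "w \<notin> e" for e
  proof -
    obtain a b where "a \<noteq> b" "a \<in> V" "b \<in> V" "e = {a, b}"
      using matching_edges[OF assms] e(1) by (auto simp: edges_of_def)
    then show ?thesis
      using e(2) by (auto simp: edges_of_def)
  qed
  then show ?thesis
    using assms unfolding is_matching_def edges_avoiding_def by blast
qed

lemma finite_matching: "is_matching V m \<Longrightarrow> finite V \<Longrightarrow> finite m"
  using matching_Union_subset finite_UnionD finite_subset by metis

lemma card_Union_matching:
  assumes "is_matching V m" "finite V"
  shows "card (\<Union>m) = 2 * card m"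
proof -
  have "card (\<Union>m) = (\<Sum>e\<in>m. card e)"
  proof (rule card_Union_disjoint)
    show "pairwise disjnt m"
      using assms(1) unfolding is_matching_def pairwise_def disjnt_def by blast
    show "finite e" if "e \<in> m" for e
      using that matching_Union_subset[OF assms(1)] assms(2) by (meson Sup_upper finite_subset order_trans)
  qed
  also have "\<dots> = (\<Sum>e\<in>m. 2)"
    using matching_edges[OF assms(1)] card_edge by (intro sum.cong) auto
  finally show ?thesis by simp
qed

definition uncovered_vertex :: "nat \<Rightarrow> nat set set \<Rightarrow> nat" where
  "uncovered_vertex n m = the_elem ({0..<2*n-1} - \<Union>m)"

lemma uncovered_vertex_near_perfect_matching:
  assumes "n \<ge> 1" "m \<in> near_perfect_matchings n"
  shows "{0..<2*n-1} - \<Union>m = {uncovered_vertex n m}"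
proof -
  let ?V = "{0..<2*n-1}"
  have m: "is_matching ?V m" "card m = n - 1"
    using assms(2) by (simp_all add: near_perfect_matchings_def)
  have "card (?V - \<Union>m) = card ?V - card (\<Union>m)"
    using matching_Union_subset[OF m(1)] finite_subset by (intro card_Diff_subset) auto
  also have "\<dots> = 1"
    using card_Union_matching[OF m(1)] m(2) assms(1) by simp
  finally show ?thesis
    unfolding uncovered_vertex_def by (metis card_1_singletonE the_elem_eq)
qed

definition perfect_extension :: "nat \<Rightarrow> nat set set \<Rightarrow> nat set set" where
  "perfect_extension n m = insert {uncovered_vertex n m, 2*n-1} m"

lemma last_vertex_notin_near_perfect_matching:
  "m \<in> near_perfect_matchings n \<Longrightarrow> e \<in> m \<Longrightarrow> 2*n-1 \<notin> e"
  using matching_Union_subset by (fastforce simp: near_perfect_matchings_def)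

lemma perfect_extension_in_perfect_matchings:
  assumes n: "n \<ge> 1" and m: "m \<in> near_perfect_matchings n"
  shows "perfect_extension n m \<in> perfect_matchings n"
proof -
  let ?u = "uncovered_vertex n m" and ?V = "{0..<2*n-1}"
  have M: "is_matching ?V m"
    using m by (simp add: near_perfect_matchings_def)
  have u: "?u \<in> ?V" "?u \<notin> \<Union>m" and cover: "\<Union>m = ?V - {?u}"
    using uncovered_vertex_near_perfect_matching[OF n m] matching_Union_subset[OF M] by auto
  have "is_matching {0..<2*n} m"
    using M by (rule matching_mono) auto
  then have "is_matching {0..<2*n} (perfect_extension n m)"
    unfolding perfect_extension_def
    using u last_vertex_notin_near_perfect_matching[OF m]
    by (intro matching_insert_edge) auto
  moreover have "\<Union>(perfect_extension n m) = {0..<2*n}"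
    using u cover n unfolding perfect_extension_def by auto
  ultimately show ?thesis
    by (simp add: perfect_matchings_def)
qed

lemma edges_avoiding_perfect_extension:
  "m \<in> near_perfect_matchings n \<Longrightarrow> edges_avoiding (2*n-1) (perfect_extension n m) = m"
  using last_vertex_notin_near_perfect_matching
  unfolding edges_avoiding_def perfect_extension_def by auto

lemma perfect_matching_restriction:
  assumes n: "n \<ge> 1" and p: "p \<in> perfect_matchings n"
  shows "edges_avoiding (2*n-1) p \<in> near_perfect_matchings n"
    and "perfect_extension n (edges_avoiding (2*n-1) p) = p"
proof -
  let ?N = "2*n-1"
  have P: "is_matching {0..<2*n} p" and cover: "\<Union>p = {0..<2*n}"
    using p by (simp_all add: perfect_matchings_def)
  have "?N \<in> \<Union>p"
    using cover n by simp
  then obtain e where e: "e \<in> p" "?N \<in> e"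
    by blast
  obtain u where u: "u \<noteq> ?N" "u < 2*n" "e = {?N, u}"
    using edge_through_vertex[OF subsetD[OF matching_edges[OF P] e(1)] e(2)] by auto
  have restr: "edges_avoiding ?N p = p - {e}"
    using matching_edge_unique[OF P _ e(1) _ e(2)] e unfolding edges_avoiding_def by blast
  have "{0..<2*n} - {?N} = {0..<?N}"
    using n by auto
  then have "is_matching {0..<?N} (p - {e})"
    using matching_edges_avoiding[OF P, of ?N] restr by simp
  moreover have "card (p - {e}) = n - 1"
  proof -
    have "card p = n"
      using card_Union_matching[OF P] cover by simp
    then show ?thesis
      using e(1) finite_matching[OF P finite_atLeastLessThan] by simp
  qed
  ultimately show near: "edges_avoiding ?N p \<in> near_perfect_matchings n"
    using restr by (simp add: near_perfect_matchings_def)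
  have "u \<notin> \<Union>(p - {e})"
    using matching_edge_unique[OF P _ e(1)] u(3) by blast
  then have "u \<in> {0..<?N} - \<Union>(p - {e})"
    using u(1,2) by simp
  then have "uncovered_vertex n (p - {e}) = u"
    using uncovered_vertex_near_perfect_matching[OF n near[unfolded restr]] by (metis singletonD)
  then show "perfect_extension n (edges_avoiding ?N p) = p"
    unfolding perfect_extension_def restr using u(3) e(1) by (auto simp: insert_commute)
qed

lemma bij_betw_perfect_extension:
  "n \<ge> 1 \<Longrightarrow> bij_betw (perfect_extension n) (near_perfect_matchings n) (perfect_matchings n)"
  by (rule bij_betw_byWitness[where f' = "edges_avoiding (2*n-1)"])
    (use edges_avoiding_perfect_extension perfect_matching_restriction
       perfect_extension_in_perfect_matchings in auto)

lemma card_Int_perfect_extension: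
  assumes n: "n \<ge> 1" and m: "m \<in> near_perfect_matchings n" and m': "m' \<in> near_perfect_matchings n"
  shows "card (perfect_extension n m \<inter> perfect_extension n m')
    = card (m \<inter> m') + card ({0..<2*n-1} - \<Union>(m \<union> m'))"
proof -
  let ?u = "uncovered_vertex n m" and ?u' = "uncovered_vertex n m'" and ?N = "2*n-1"
  have uncovered: "{0..<2*n-1} - \<Union>(m \<union> m') = {?u} \<inter> {?u'}"
    using uncovered_vertex_near_perfect_matching[OF n m]
      uncovered_vertex_near_perfect_matching[OF n m'] by blast
  have "?u \<in> {0..<?N}"
    using uncovered_vertex_near_perfect_matching[OF n m] by blast
  then have "perfect_extension n m \<inter> perfect_extension n m'
      = (if ?u = ?u' then insert {?u, ?N} (m \<inter> m') else m \<inter> m')"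
    using last_vertex_notin_near_perfect_matching[OF m]
      last_vertex_notin_near_perfect_matching[OF m']
    unfolding perfect_extension_def by (auto simp: doubleton_eq_iff)
  moreover have "finite (m \<inter> m')"
    using m finite_matching by (auto simp: near_perfect_matchings_def)
  moreover have "{?u, ?N} \<notin> m"
    using last_vertex_notin_near_perfect_matching[OF m] by blast
  ultimately show ?thesis
    unfolding uncovered by (cases "?u = ?u'") simp_all
qed

lemma component_refl: "v \<in> V \<Longrightarrow> v \<in> component V E v"
  by (simp add: component_def)

lemma component_subset: "component V E v \<subseteq> V"
  by (auto simp: component_def)

lemma finite_components: "finite V \<Longrightarrow> finite (components V E)"
  by (simp add: components_def)

lemma component_edge_closed:
  assumes "a \<in> component V E v" "{a, b} \<in> E" "E \<subseteq> edges_of V"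
  shows "b \<in> component V E v"
proof -
  have "b \<in> V"
    using assms(2,3) edge_subset by blast
  moreover have "(v, b) \<in> (adj_rel E)\<^sup>*"
    using assms(1,2) by (auto simp: component_def adj_rel_def intro: rtrancl_into_rtrancl)
  ultimately show ?thesis
    by (simp add: component_def)
qed

lemma component_minimal:
  assumes "v \<in> S" "\<And>a b. a \<in> S \<Longrightarrow> {a, b} \<in> E \<Longrightarrow> b \<in> S"
  shows "component V E v \<subseteq> S"
proof
  fix w assume "w \<in> component V E v"
  then have "(v, w) \<in> (adj_rel E)\<^sup>*"
    by (simp add: component_def)
  then show "w \<in> S"
    by induction (use assms in \<open>auto simp: adj_rel_def\<close>)
qed

lemma edge_subset_component:
  assumes "E \<subseteq> edges_of V" "c \<in> components V E" "e \<in> E" "a \<in> e" "a \<in> c"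
  shows "e \<subseteq> c"
proof -
  obtain v where "c = component V E v"
    using assms(2) by (auto simp: components_def)
  moreover obtain b where "e = {a, b}"
    using edge_through_vertex assms(1,3,4) by blast
  ultimately show ?thesis
    using component_edge_closed assms by blast
qed

lemma components_card_one:
  assumes "E \<subseteq> edges_of V"
  shows "{c \<in> components V E. card c = 1} = (\<lambda>v. {v}) ` (V - \<Union>E)"
proof (intro equalityI subsetI)
  fix c assume "c \<in> {c \<in> components V E. card c = 1}"
  then have c: "c \<in> components V E" "card c = 1"
    by simp_all
  then obtain v where v: "v \<in> V" "c = component V E v"
    by (auto simp: components_def)
  obtain w where "c = {w}"
    using c(2) card_1_singletonE by blast
  moreover have "v \<in> c"
    using v component_refl by simp
  ultimately have cv: "c = {v}"
    by simp
  have "v \<notin> e" if e: "e \<in> E" for e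
  proof
    assume "v \<in> e"
    then have "e \<subseteq> {v}"
      using edge_subset_component[OF assms c(1) e] cv by blast
    then have "card e \<le> 1"
      using card_mono[of "{v}" e] by simp
    then show False
      using card_edge e assms by fastforce
  qed
  then show "c \<in> (\<lambda>v. {v}) ` (V - \<Union>E)"
    using v cv by blast
next
  fix c assume "c \<in> (\<lambda>v. {v}) ` (V - \<Union>E)"
  then obtain v where v: "v \<in> V" "v \<notin> \<Union>E" "c = {v}"
    by blast
  have "component V E v = {v}"
    using component_minimal[of v "{v}" E V] component_refl[OF v(1)] v(2) by blast
  then show "c \<in> {c \<in> components V E. card c = 1}"
    using v by (auto simp: components_def)
qed

text \<open>A two-vertex component contains a vertex covered by m, and the edge of m at that
  vertex must then be the whole component.\<close>

lemma component_card_two_in_matching: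
  assumes "m \<subseteq> E" "E \<subseteq> edges_of V" "finite V" "card (V - \<Union>m) \<le> 1"
    and c: "c \<in> components V E" "card c = 2"
  shows "c \<in> m"
proof -
  have "c \<subseteq> V"
    using c(1) component_subset by (auto simp: components_def)
  have "\<not> c \<subseteq> V - \<Union>m"
    using card_mono[of "V - \<Union>m" c] assms(3,4) c(2) by auto
  then obtain a e where a: "a \<in> c" "e \<in> m" "a \<in> e"
    using \<open>c \<subseteq> V\<close> by blast
  then have "e \<subseteq> c"
    using edge_subset_component assms by blast
  moreover have "card e = card c"
    using a(2) assms(1,2) c(2) card_edge by auto
  ultimately have "e = c"
    using card_subset_eq \<open>c \<subseteq> V\<close> assms(3) finite_subset by metis
  then show ?thesis
    using a(2) by simp
qed

lemma common_edge_in_components: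
  assumes m: "is_matching V m" and m': "is_matching V m'" and e: "e \<in> m \<inter> m'"
  shows "e \<in> components V (m \<union> m')"
proof -
  have "e \<in> edges_of V"
    using e matching_edges[OF m] by blast
  then obtain a b where ab: "a \<noteq> b" "a \<in> V" "b \<in> V" "e = {a, b}"
    unfolding edges_of_def by blast
  have "component V (m \<union> m') a \<subseteq> e"
    using component_minimal[of a e "m \<union> m'"] ab e
      matching_edge_unique[OF m] matching_edge_unique[OF m'] by blast
  moreover have "e \<subseteq> component V (m \<union> m') a"
    using component_refl[OF ab(2)] component_edge_closed[of a V "m \<union> m'" a b] ab e
      matching_edges[OF m] matching_edges[OF m'] by blast
  ultimately show ?thesis
    using ab(2) by (auto simp: components_def)
qed

lemma components_card_two:
  assumes "is_matching V m" "is_matching V m'" "finite V"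
    and "card (V - \<Union>m) \<le> 1" "card (V - \<Union>m') \<le> 1"
  shows "{c \<in> components V (m \<union> m'). card c = 2} = m \<inter> m'"
proof -
  have E: "m \<union> m' \<subseteq> edges_of V"
    using assms(1,2) matching_edges by blast
  show ?thesis
  proof (intro equalityI subsetI)
    fix c assume "c \<in> {c \<in> components V (m \<union> m'). card c = 2}"
    then show "c \<in> m \<inter> m'"
      using component_card_two_in_matching[OF _ E assms(3)] assms(4,5) by blast
  next
    fix e assume "e \<in> m \<inter> m'"
    then show "e \<in> {c \<in> components V (m \<union> m'). card c = 2}"
      using common_edge_in_components[OF assms(1,2)] E card_edge by blast
  qed
qed

lemma size_small_components:
  assumes "E \<subseteq> edges_of V" "finite V"
  shows "size (filter_mset (\<lambda>p. p \<le> 2) (image_mset card (mset_set (components V E))))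
    = card (V - \<Union>E) + card {c \<in> components V E. card c = 2}"
proof -
  let ?C = "components V E"
  have nonempty: "card c \<noteq> 0" if c: "c \<in> ?C" for c
  proof -
    obtain v where v: "v \<in> V" "c = component V E v"
      using c by (auto simp: components_def)
    then have "v \<in> c" "finite c"
      using component_refl finite_subset[OF component_subset assms(2)] by simp_all
    then show ?thesis
      by auto
  qed
  have "size (filter_mset (\<lambda>p. p \<le> 2) (image_mset card (mset_set ?C)))
      = card {c \<in> ?C. card c \<le> 2}"
    using finite_components[OF assms(2)] by (simp add: filter_mset_image_mset)
  also have "{c \<in> ?C. card c \<le> 2} = {c \<in> ?C. card c = 1} \<union> {c \<in> ?C. card c = 2}"
    using nonempty by fastforce
  also have "card \<dots> = card {c \<in> ?C. card c = 1} + card {c \<in> ?C. card c = 2}"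
    using finite_components[OF assms(2)] by (intro card_Un_disjoint) auto
  also have "card {c \<in> ?C. card c = 1} = card (V - \<Union>E)"
    unfolding components_card_one[OF assms(1)] by (simp add: card_image)
  finally show ?thesis .
qed

lemma size_small_parts_d':
  assumes n: "n \<ge> 1" and m: "m \<in> near_perfect_matchings n" and m': "m' \<in> near_perfect_matchings n"
  shows "size (filter_mset (\<lambda>p. p \<le> 2) (d' n m m'))
    = card (m \<inter> m') + card ({0..<2*n-1} - \<Union>(m \<union> m'))"
proof -
  let ?V = "{0..<2*n-1}"
  have M: "is_matching ?V m" "is_matching ?V m'"
    using m m' by (simp_all add: near_perfect_matchings_def)
  have "card (?V - \<Union>m) \<le> 1" "card (?V - \<Union>m') \<le> 1"
    using uncovered_vertex_near_perfect_matching[OF n m]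
      uncovered_vertex_near_perfect_matching[OF n m'] by simp_all
  then show ?thesis
    unfolding d'_def
    using size_small_components[of "m \<union> m'" ?V] components_card_two[OF M]
      matching_edges[OF M(1)] matching_edges[OF M(2)] by simp
qed

theorem mainTheorem12:
  fixes n t :: nat
  assumes "n \<ge> 1"
  shows "graph_iso (near_perfect_matchings n) (Theta_adj n t)
                   (perfect_matchings n) (Gamma_adj n t)"
  unfolding graph_iso_def
proof (intro exI conjI ballI)
  let ?f = "perfect_extension n"
  show bij: "bij_betw ?f (near_perfect_matchings n) (perfect_matchings n)"
    using bij_betw_perfect_extension[OF assms] .
  fix m m' assume m: "m \<in> near_perfect_matchings n" and m': "m' \<in> near_perfect_matchings n"
  have "m \<noteq> m' \<longleftrightarrow> ?f m \<noteq> ?f m'"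
    using bij m m' by (metis bij_betw_inv_into_left)
  moreover have "size (filter_mset (\<lambda>p. p \<le> 2) (d' n m m')) = card (?f m \<inter> ?f m')"
    using size_small_parts_d'[OF assms m m'] card_Int_perfect_extension[OF assms m m'] by simp
  ultimately show "Theta_adj n t m m' \<longleftrightarrow> Gamma_adj n t (?f m) (?f m')"
    unfolding Theta_adj_def Gamma_adj_def by simp
qed

end
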